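(* Let $A\in\mathbb{C}^{m\times n}$, $B\in\mathbb{C}^{n\times p}$, $C\in\mathbb{C}^{p\times q}$ and $M=ABC$. Then each of the following sets is contained in $\{M^{(1,2)}\}$: $\{(A^{(1,2)}M)^{(1,2)}A^{(1,2)}\}$, $\{C^{(1,2)}(MC^{(1,2)})^{(1,2)}\}$, $\{(A^{*}M)^{(1,2)}A^{*}\}$, $\{C^{*}(MC^{*})^{(1,2)}\}$, $\{(AA^{*}M)^{(1,2)}AA^{*}\}$, $\{C^{*}C(MC^{*}C)^{(1,2)}\}$, $\{C^{(1,2)}(A^{(1,2)}MC^{(1,2)})^{(1,2)}A^{(1,2)}\}$, $\{C^{*}(A^{*}MC^{*})^{(1,2)}A^{*}\}$, $\{[(AB)^{(1,2)}M]^{(1,2)}(AB)^{(1,2)}\}$, $\{(BC)^{(1,2)}[M(BC)^{(1,2)}]^{(1,2)}\}$, $\{[(AB)^{*}M]^{(1,2)}(AB)^{*}\}$, $\{(BC)^{*}[M(BC)^{*}]^{(1,2)}\}$, $\{[(ABB^{(1,2)})^{(1,2)}M]^{(1,2)}(ABB^{(1,2)})^{(1,2)}\}$, $\{(B^{(1,2)}BC)^{(1,2)}[M(B^{(1,2)}BC)^{(1,2)}]^{(1,2)}\}$, $\{[(ABB^{*})^{(1,2)}M]^{(1,2)}(ABB^{*})^{(1,2)}\}$, $\{(B^{*}BC)^{(1,2)}[M(B^{*}BC)^{(1,2)}]^{(1,2)}\}$, $\{C^{*}C(AA^{*}MC^{*}C)^{(1,2)}AA^{*}\}$, $\{(BC)^{(1,2)}[(AB)^{(1,2)}M(BC)^{(1,2)}]^{(1,2)}(AB)^{(1,2)}\}$,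 $\{(BC)^{*}[(AB)^{*}M(BC)^{*}]^{(1,2)}(AB)^{*}\}$, $\{(B^{(1,2)}BC)^{(1,2)}[(ABB^{(1,2)})^{(1,2)}M(B^{(1,2)}BC)^{(1,2)}]^{(1,2)}(ABB^{(1,2)})^{(1,2)}\}$, $\{(B^{(1,2)}BC)^{*}[(ABB^{(1,2)})^{*}M(B^{(1,2)}BC)^{*}]^{(1,2)}(ABB^{(1,2)})^{*}\}$, $\{(B^{*}BC)^{(1,2)}[(ABB^{*})^{(1,2)}M(B^{*}BC)^{(1,2)}]^{(1,2)}(ABB^{*})^{(1,2)}\}$, $\{(B^{*}BC)^{*}[(ABB^{*})^{*}M(B^{*}BC)^{*}]^{(1,2)}(ABB^{*})^{*}\}$.
   Context: For a complex matrix $X$, $X^*$ is its conjugate transpose. For $X\in\mathbb{C}^{p\times q}$, a matrix $G\in\mathbb{C}^{q\times p}$ is called an $\{i,\ldots,j\}$-generalized inverse of $X$ (written $X^{(i,\ldots,j)}$) if it satisfies the equations numbered $i,\ldots,j$ among the four Penrose equations (i) $XGX=X$, (ii) $GXG=G$, (iii) $(XG)^*=XG$, (iv) $(GX)^*=GX$; $\{X^{(i,\ldots,j)}\}$ denotes the set of all such $G$. For a matrix expression involving generalized inverses, $\{\cdot\}$ denotes the set of all values of the expression as each generalized inverse occurring in it ranges over all admissible choices; repeated occurrences of the same symbol (e.g. $(AB)^{(1,2)}$ appearing twice) denote one and the same choice, and a generalized inverse of a matrix that itself contains a chosen generalized inverse is taken with respect to that chosen matrix. *)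

theory Defs
  imports "HOL-Analysis.Analysis"
begin

definition cstar :: "complex^'n^'m \<Rightarrow> complex^'m^'n" where
  "cstar X = (\<chi> i j. cnj (X $ j $ i))"

definition inv12 :: "complex^'n^'m \<Rightarrow> (complex^'m^'n) set" where
  "inv12 X = {G. X ** G ** X = X \<and> G ** X ** G = G}"

end

theory Submission
  imports Defs
begin

(*
  Call P injective on the column space of M when P x = P y forces x = y for x, y in the range
  of M (equivalently rank (P M) = rank M). Then P can be cancelled from P M G P M = P M, so G P
  is a {1,2}-inverse of M whenever G is one of P M; dually Q G is one whenever G is one of M Q
  and Q^* is injective on the column space of M^*. Every set in the theorem has this shape for a
  factorization M = K R with P injective on the column space of K: an inner inverse X of K
  qualifies because K X K = K, the adjoint K^* because K^* K x = 0 forces |K x|^2 = x^* K^* K x = 0,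
  and the factorizations needed are M = A (B C) = (A B) C = (A B B') (B C) = (A B) (B' B C)
  for an inner inverse B' of B.
*)

abbreviation inj_on_col_space :: "'a::semiring_1^'m^'r \<Rightarrow> 'a^'k^'m \<Rightarrow> bool" where
  "inj_on_col_space P K \<equiv> inj_on ((*v) P) (range ((*v) K))"

lemma cstar_matrix_mult: "cstar (X ** Y) = cstar Y ** cstar X"
  by (simp add: cstar_def matrix_matrix_mult_def vec_eq_iff mult.commute)

lemma cstar_cstar [simp]: "cstar (cstar X) = X"
  by (simp add: cstar_def vec_eq_iff)

lemma cstar_eq_iff [simp]: "cstar X = cstar Y \<longleftrightarrow> X = Y"
  by (metis cstar_cstar)

lemma cstar_mult_eq_0:
  assumes "cstar K *v (K *v x) = 0"
  shows "K *v x = 0"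
proof -
  define y where "y = K *v x"
  have "0 = (\<Sum>j\<in>UNIV. cnj (x $ j) * (cstar K *v y) $ j)"
    using assms by (simp add: y_def)
  also have "\<dots> = (\<Sum>j\<in>UNIV. \<Sum>i\<in>UNIV. cnj (K $ i $ j * x $ j) * y $ i)"
    by (simp add: cstar_def matrix_vector_mult_def sum_distrib_left mult_ac)
  also have "\<dots> = (\<Sum>i\<in>UNIV. \<Sum>j\<in>UNIV. cnj (K $ i $ j * x $ j) * y $ i)"
    by (rule sum.swap)
  also have "\<dots> = (\<Sum>i\<in>UNIV. cnj (y $ i) * y $ i)"
    by (rule sum.cong) (simp_all add: y_def matrix_vector_mult_def sum_distrib_right)
  also have "\<dots> = of_real (\<Sum>i\<in>UNIV. (cmod (y $ i))\<^sup>2)"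
    unfolding of_real_sum complex_norm_square by (simp add: mult.commute)
  finally have "(\<Sum>i\<in>UNIV. (cmod (y $ i))\<^sup>2) = 0"
    by (metis of_real_eq_0_iff)
  then show ?thesis
    by (simp add: y_def[symmetric] vec_eq_iff sum_nonneg_eq_0_iff)
qed

lemma inj_on_col_space_cstar: "inj_on_col_space (cstar K) K"
proof (rule inj_onI, elim rangeE)
  fix u v x y
  assume eq: "cstar K *v u = cstar K *v v" and u: "u = K *v x" and v: "v = K *v y"
  have "cstar K *v (K *v (x - y)) = 0"
    using eq by (simp add: u v matrix_vector_mult_diff_distrib)
  then have "K *v (x - y) = 0" by (rule cstar_mult_eq_0)
  then show "u = v" by (simp add: u v matrix_vector_mult_diff_distrib)
qed

lemma inj_on_col_space_g_inverse:
  assumes "K ** X ** K = K"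
  shows "inj_on_col_space X K"
proof (rule inj_onI, elim rangeE)
  fix u v x y
  assume eq: "X *v u = X *v v" and u: "u = K *v x" and v: "v = K *v y"
  have "(K ** X ** K) *v x = (K ** X ** K) *v y"
    using eq by (simp add: u v flip: matrix_vector_mul_assoc)
  then show "u = v" using assms by (simp add: u v)
qed

lemma col_space_matrix_mult: "range ((*v) (K ** R)) \<subseteq> range ((*v) K)"
proof (rule image_subsetI)
  fix x
  have "(K ** R) *v x = K *v (R *v x)" by (rule matrix_vector_mul_assoc[symmetric])
  then show "(K ** R) *v x \<in> range ((*v) K)" by (rule range_eqI)
qed

lemma inj_on_col_space_matrix_mult_right:
  "inj_on_col_space P K \<Longrightarrow> inj_on_col_space P (K ** R)"
  by (rule inj_on_subset[OF _ col_space_matrix_mult])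

lemma inj_on_col_space_matrix_mult:
  assumes "inj_on_col_space P1 K" and "inj_on_col_space P2 (P1 ** K)"
  shows "inj_on_col_space (P2 ** P1) K"
proof -
  have "(*v) P1 ` range ((*v) K) = range ((*v) (P1 ** K))"
    by (simp add: image_image matrix_vector_mul_assoc)
  then have "inj_on ((*v) P2 \<circ> (*v) P1) (range ((*v) K))"
    using comp_inj_on[OF assms(1)] assms(2) by simp
  then show ?thesis
    by (simp add: comp_def matrix_vector_mul_assoc)
qed

lemma inj_on_col_space_matrix_mult_left_factor:
  "inj_on_col_space (P2 ** P1) K \<Longrightarrow> inj_on_col_space P1 K"
  by (rule inj_on_imageI2[of "(*v) P2"]) (simp add: comp_def matrix_vector_mul_assoc)

lemma inj_on_col_space_cancel:
  assumes "inj_on_col_space P K" and "P ** K ** W1 = P ** K ** W2"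
  shows "K ** W1 = K ** W2"
proof (subst matrix_eq, rule allI)
  fix x
  have "P *v (K *v (W1 *v x)) = P *v (K *v (W2 *v x))"
    using assms(2) by (simp add: matrix_vector_mul_assoc matrix_mul_assoc)
  then have "K *v (W1 *v x) = K *v (W2 *v x)"
    by (rule inj_onD[OF assms(1)]) (rule rangeI)+
  then show "(K ** W1) *v x = (K ** W2) *v x"
    by (simp add: matrix_vector_mul_assoc)
qed

lemma inj_on_col_space_cancel_right:
  assumes "inj_on_col_space (cstar Q) (cstar K)" and "W1 ** K ** Q = W2 ** K ** Q"
  shows "W1 ** K = W2 ** K"
proof -
  have "cstar Q ** cstar K ** cstar W1 = cstar Q ** cstar K ** cstar W2"
    using arg_cong[OF assms(2), of cstar] by (simp add: cstar_matrix_mult matrix_mul_assoc)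
  then have "cstar K ** cstar W1 = cstar K ** cstar W2"
    by (rule inj_on_col_space_cancel[OF assms(1)])
  then have "cstar (W1 ** K) = cstar (W2 ** K)"
    by (simp add: cstar_matrix_mult)
  then show ?thesis by simp
qed

lemma inj_on_col_space_inv12: "X \<in> inv12 K \<Longrightarrow> inj_on_col_space X K"
  by (rule inj_on_col_space_g_inverse) (simp add: inv12_def)

lemma inj_on_col_space_gram: "inj_on_col_space (L ** cstar (A ** L)) (A ** L)"
proof (rule inj_on_col_space_matrix_mult)
  show "inj_on_col_space (cstar (A ** L)) (A ** L)" by (rule inj_on_col_space_cstar)
  have "inj_on_col_space (cstar (cstar L)) (cstar L ** (cstar A ** (A ** L)))"
    by (rule inj_on_col_space_matrix_mult_right[OF inj_on_col_space_cstar])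
  then show "inj_on_col_space L (cstar (A ** L) ** (A ** L))"
    by (simp add: cstar_matrix_mult matrix_mul_assoc)
qed

lemma inj_on_col_space_gram_self: "inj_on_col_space (K ** cstar K) K"
  using inj_on_col_space_gram[of K "mat 1"] by simp

lemma inj_on_col_space_inv12_gram:
  assumes "X \<in> inv12 (A ** L ** cstar L)"
  shows "inj_on_col_space X (A ** L)"
proof -
  have inj: "inj_on_col_space (cstar (cstar L)) (cstar L)" by (rule inj_on_col_space_cstar)
  have "(A ** L ** cstar L ** X ** A) ** L ** cstar L = A ** L ** cstar L"
    using assms by (simp add: inv12_def matrix_mul_assoc)
  then have "(A ** L ** cstar L ** X ** A) ** L = A ** L"
    by (rule inj_on_col_space_cancel_right[OF inj])
  then have "(A ** L) ** (cstar L ** X) ** (A ** L) = A ** L"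
    by (simp add: matrix_mul_assoc)
  then show ?thesis
    by (rule inj_on_col_space_matrix_mult_left_factor[OF inj_on_col_space_g_inverse])
qed

lemma inv12_cstar_iff: "cstar G \<in> inv12 (cstar X) \<longleftrightarrow> G \<in> inv12 X"
proof -
  have "cstar X ** cstar G ** cstar X = cstar (X ** G ** X)"
    and "cstar G ** cstar X ** cstar G = cstar (G ** X ** G)"
    by (simp_all add: cstar_matrix_mult matrix_mul_assoc)
  then show ?thesis by (simp add: inv12_def)
qed

lemma inj_on_col_space_cstar_inv12:
  "X \<in> inv12 K \<Longrightarrow> inj_on_col_space (cstar X) (cstar K)"
  by (rule inj_on_col_space_inv12) (simp add: inv12_cstar_iff)

lemma inj_on_col_space_cstar_inv12_gram:
  assumes "X \<in> inv12 (cstar L ** L ** C)"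
  shows "inj_on_col_space (cstar X) (cstar (L ** C))"
proof -
  have "cstar X \<in> inv12 (cstar C ** cstar L ** L)"
    using inv12_cstar_iff[THEN iffD2, OF assms] by (simp add: cstar_matrix_mult matrix_mul_assoc)
  then show ?thesis
    using inj_on_col_space_inv12_gram[of "cstar X" "cstar C" "cstar L"]
    by (simp add: cstar_matrix_mult)
qed

lemma inv12_left_factor:
  assumes "M = K ** R" and "inj_on_col_space P K" and "G \<in> inv12 (P ** M)"
  shows "G ** P \<in> inv12 M"
proof -
  have inj: "inj_on_col_space P M"
    unfolding assms(1) by (rule inj_on_col_space_matrix_mult_right[OF assms(2)])
  have g1: "P ** M ** (G ** P ** M) = P ** M ** mat 1" and g2: "G ** (P ** M) ** G = G"
    using assms(3) by (simp_all add: inv12_def matrix_mul_assoc)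
  from g1 have "M ** (G ** P ** M) = M ** mat 1"
    by (rule inj_on_col_space_cancel[OF inj])
  then show ?thesis using g2 by (simp add: inv12_def matrix_mul_assoc)
qed

lemma inv12_right_factor:
  assumes "M = R ** K" and "inj_on_col_space (cstar Q) (cstar K)" and "G \<in> inv12 (M ** Q)"
  shows "Q ** G \<in> inv12 M"
proof -
  have "cstar M = cstar K ** cstar R" by (simp add: assms(1) cstar_matrix_mult)
  moreover have "cstar G \<in> inv12 (cstar Q ** cstar M)"
    using assms(3) by (simp flip: cstar_matrix_mult add: inv12_cstar_iff)
  ultimately have "cstar G ** cstar Q \<in> inv12 (cstar M)"
    by (rule inv12_left_factor[OF _ assms(2)])
  then show ?thesis by (simp flip: cstar_matrix_mult add: inv12_cstar_iff)
qed

lemma inv12_two_sided_factor: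
  assumes "M = K ** R" and "M = R' ** K'"
    and "inj_on_col_space P K" and "inj_on_col_space (cstar Q) (cstar K')"
    and "G \<in> inv12 (P ** M ** Q)"
  shows "Q ** G ** P \<in> inv12 M"
proof -
  have "G ** P \<in> inv12 (M ** Q)"
    using assms(1,3,5)
    by (intro inv12_left_factor[of _ K "R ** Q"]) (simp_all add: matrix_mul_assoc)
  then have "Q ** (G ** P) \<in> inv12 M"
    by (rule inv12_right_factor[OF assms(2,4)])
  then show ?thesis by (simp add: matrix_mul_assoc)
qed

lemma inner_inverse_factorizations:
  assumes "B ** B1 ** B = B"
  shows "A ** B ** C = A ** B ** B1 ** (B ** C)" and "A ** B ** C = A ** B ** (B1 ** B ** C)"
proof -
  have "A ** B ** C = A ** (B ** B1 ** B) ** C" by (simp add: assms)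
  then show "A ** B ** C = A ** B ** B1 ** (B ** C)" and "A ** B ** C = A ** B ** (B1 ** B ** C)"
    by (simp_all add: matrix_mul_assoc)
qed

theorem theorem3p3:
  fixes A :: "complex^'n^'m" and B :: "complex^'p^'n" and C :: "complex^'q^'p"
    and M :: "complex^'q^'m"
  assumes hM: "M = A ** B ** C"
  shows
   "{G ** A1 | A1 G. A1 \<in> inv12 A \<and> G \<in> inv12 (A1 ** M)} \<subseteq> inv12 M \<and>
    {C1 ** G | C1 G. C1 \<in> inv12 C \<and> G \<in> inv12 (M ** C1)} \<subseteq> inv12 M \<and>
    {G ** cstar A | G. G \<in> inv12 (cstar A ** M)} \<subseteq> inv12 M \<and>
    {cstar C ** G | G. G \<in> inv12 (M ** cstar C)} \<subseteq> inv12 M \<and>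
    {G ** (A ** cstar A) | G. G \<in> inv12 (A ** cstar A ** M)} \<subseteq> inv12 M \<and>
    {cstar C ** C ** G | G. G \<in> inv12 (M ** cstar C ** C)} \<subseteq> inv12 M \<and>
    {C1 ** G ** A1 | A1 C1 G. A1 \<in> inv12 A \<and> C1 \<in> inv12 C \<and> G \<in> inv12 (A1 ** M ** C1)}
       \<subseteq> inv12 M \<and>
    {cstar C ** G ** cstar A | G. G \<in> inv12 (cstar A ** M ** cstar C)} \<subseteq> inv12 M \<and>
    {G ** X | X G. X \<in> inv12 (A ** B) \<and> G \<in> inv12 (X ** M)} \<subseteq> inv12 M \<and>
    {X ** G | X G. X \<in> inv12 (B ** C) \<and> G \<in> inv12 (M ** X)} \<subseteq> inv12 M \<and>
    {G ** cstar (A ** B) | G. G \<in> inv12 (cstar (A ** B) ** M)} \<subseteq> inv12 M \<and>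
    {cstar (B ** C) ** G | G. G \<in> inv12 (M ** cstar (B ** C))} \<subseteq> inv12 M \<and>
    {G ** X | B1 X G. B1 \<in> inv12 B \<and> X \<in> inv12 (A ** B ** B1) \<and> G \<in> inv12 (X ** M)}
       \<subseteq> inv12 M \<and>
    {X ** G | B1 X G. B1 \<in> inv12 B \<and> X \<in> inv12 (B1 ** B ** C) \<and> G \<in> inv12 (M ** X)}
       \<subseteq> inv12 M \<and>
    {G ** X | X G. X \<in> inv12 (A ** B ** cstar B) \<and> G \<in> inv12 (X ** M)} \<subseteq> inv12 M \<and>
    {X ** G | X G. X \<in> inv12 (cstar B ** B ** C) \<and> G \<in> inv12 (M ** X)} \<subseteq> inv12 M \<and>
    {cstar C ** C ** G ** (A ** cstar A) | G. G \<in> inv12 (A ** cstar A ** M ** cstar C ** C)}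
       \<subseteq> inv12 M \<and>
    {Y ** G ** X | X Y G. X \<in> inv12 (A ** B) \<and> Y \<in> inv12 (B ** C) \<and> G \<in> inv12 (X ** M ** Y)}
       \<subseteq> inv12 M \<and>
    {cstar (B ** C) ** G ** cstar (A ** B) | G. G \<in> inv12 (cstar (A ** B) ** M ** cstar (B ** C))}
       \<subseteq> inv12 M \<and>
    {Y ** G ** X | B1 X Y G. B1 \<in> inv12 B \<and> X \<in> inv12 (A ** B ** B1) \<and>
        Y \<in> inv12 (B1 ** B ** C) \<and> G \<in> inv12 (X ** M ** Y)} \<subseteq> inv12 M \<and>
    {cstar (B1 ** B ** C) ** G ** cstar (A ** B ** B1) | B1 G. B1 \<in> inv12 B \<and>
        G \<in> inv12 (cstar (A ** B ** B1) ** M ** cstar (B1 ** B ** C))} \<subseteq> inv12 M \<and>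
    {Y ** G ** X | X Y G. X \<in> inv12 (A ** B ** cstar B) \<and> Y \<in> inv12 (cstar B ** B ** C) \<and>
        G \<in> inv12 (X ** M ** Y)} \<subseteq> inv12 M \<and>
    {cstar (cstar B ** B ** C) ** G ** cstar (A ** B ** cstar B) | G.
        G \<in> inv12 (cstar (A ** B ** cstar B) ** M ** cstar (cstar B ** B ** C))} \<subseteq> inv12 M"
proof -
  have fA: "M = A ** (B ** C)" using hM by (simp add: matrix_mul_assoc)
  have fB1: "M = A ** B ** B1 ** (B ** C)" "M = A ** B ** (B1 ** B ** C)"
    if "B1 \<in> inv12 B" for B1
    using that hM inner_inverse_factorizations[of B B1 A C] by (simp_all add: inv12_def)
  have inj_CsC: "inj_on_col_space (cstar (cstar C ** C)) (cstar C)"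
    using inj_on_col_space_gram_self[of "cstar C"] by (simp add: cstar_matrix_mult)
  have inj_ABBs: "inj_on_col_space (cstar (A ** B ** cstar B)) (A ** B)"
    using inj_on_col_space_gram[of B A] by (simp add: cstar_matrix_mult matrix_mul_assoc)
  have inj_BsBC: "inj_on_col_space (cstar (cstar (cstar B ** B ** C))) (cstar (B ** C))"
    using inj_on_col_space_gram[of "cstar B" "cstar C"]
    by (simp add: cstar_matrix_mult matrix_mul_assoc)
  show ?thesis
    apply (intro conjI subsetI; elim CollectE exE conjE; hypsubst)
    subgoal premises h by (rule inv12_left_factor[OF fA inj_on_col_space_inv12[OF h(1)] h(2)])
    subgoal premises h
      by (rule inv12_right_factor[OF hM inj_on_col_space_cstar_inv12[OF h(1)] h(2)])
    subgoal premises h by (rule inv12_left_factor[OF fA inj_on_col_space_cstar h])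
    subgoal premises h by (rule inv12_right_factor[OF hM inj_on_col_space_cstar h])
    subgoal premises h by (rule inv12_left_factor[OF fA inj_on_col_space_gram_self h])
    subgoal premises h using h
      by (intro inv12_right_factor[OF hM inj_CsC]) (simp add: matrix_mul_assoc)
    subgoal premises h
      by (rule inv12_two_sided_factor[OF fA hM inj_on_col_space_inv12[OF h(1)]
        inj_on_col_space_cstar_inv12[OF h(2)] h(3)])
    subgoal premises h
      by (rule inv12_two_sided_factor[OF fA hM inj_on_col_space_cstar inj_on_col_space_cstar h])
    subgoal premises h by (rule inv12_left_factor[OF hM inj_on_col_space_inv12[OF h(1)] h(2)])
    subgoal premises h
      by (rule inv12_right_factor[OF fA inj_on_col_space_cstar_inv12[OF h(1)] h(2)])
    subgoal premises h by (rule inv12_left_factor[OF hM inj_on_col_space_cstar h])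
    subgoal premises h by (rule inv12_right_factor[OF fA inj_on_col_space_cstar h])
    subgoal premises h
      by (rule inv12_left_factor[OF fB1(1)[OF h(1)] inj_on_col_space_inv12[OF h(2)] h(3)])
    subgoal premises h
      by (rule inv12_right_factor[OF fB1(2)[OF h(1)] inj_on_col_space_cstar_inv12[OF h(2)] h(3)])
    subgoal premises h by (rule inv12_left_factor[OF hM inj_on_col_space_inv12_gram[OF h(1)] h(2)])
    subgoal premises h
      by (rule inv12_right_factor[OF fA inj_on_col_space_cstar_inv12_gram[OF h(1)] h(2)])
    subgoal premises h using h
      by (intro inv12_two_sided_factor[OF fA hM inj_on_col_space_gram_self inj_CsC])
        (simp add: matrix_mul_assoc)
    subgoal premises h
      by (rule inv12_two_sided_factor[OF hM fA inj_on_col_space_inv12[OF h(1)]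
        inj_on_col_space_cstar_inv12[OF h(2)] h(3)])
    subgoal premises h
      by (rule inv12_two_sided_factor[OF hM fA inj_on_col_space_cstar inj_on_col_space_cstar h])
    subgoal premises h
      by (rule inv12_two_sided_factor[OF fB1[OF h(1)] inj_on_col_space_inv12[OF h(2)]
        inj_on_col_space_cstar_inv12[OF h(3)] h(4)])
    subgoal premises h
      by (rule inv12_two_sided_factor[OF fB1[OF h(1)]
        inj_on_col_space_cstar inj_on_col_space_cstar h(2)])
    subgoal premises h
      by (rule inv12_two_sided_factor[OF hM fA inj_on_col_space_inv12_gram[OF h(1)]
        inj_on_col_space_cstar_inv12_gram[OF h(2)] h(3)])
    subgoal premises h by (rule inv12_two_sided_factor[OF hM fA inj_ABBs inj_BsBC h])
    done
qed

end
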